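(* Let $\mathcal{V}$ be a variety of groups and $m\ge 0$ such that the relatively free group $F_{m+1}(\mathcal{V})$ is infinite. Then the subgroup of $F_{m+1}(\mathcal{V})$ generated by $m$ of the $m+1$ free generators (which is naturally isomorphic to $F_m(\mathcal{V})$) has infinite index in $F_{m+1}(\mathcal{V})$.
   Context: For a variety $\mathcal{V}$ and cardinal $k$, $F_k(\mathcal{V})$ is the $\mathcal{V}$-free group of rank $k$, i.e., $F_k/V(F_k)$ where $F_k$ is the absolutely free group of rank $k$ and $V(F_k)$ its verbal subgroup for $\mathcal{V}$. *)

theory Defs
  imports "HOL-Algebra.Coset" "HOL-Algebra.Generated_Groups"
begin

datatype gword = GVar nat | GOne | GMul gword gword | GInv gword

fun gvars :: "gword \<Rightarrow> nat set" where
  "gvars (GVar i) = {i}"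
| "gvars GOne = {}"
| "gvars (GMul a b) = gvars a \<union> gvars b"
| "gvars (GInv a) = gvars a"

fun gsubst :: "(nat \<Rightarrow> gword) \<Rightarrow> gword \<Rightarrow> gword" where
  "gsubst s (GVar i) = s i"
| "gsubst s GOne = GOne"
| "gsubst s (GMul a b) = GMul (gsubst s a) (gsubst s b)"
| "gsubst s (GInv a) = GInv (gsubst s a)"

text \<open>A variety is given by a set W of laws (words w, meaning the law w = 1).
  veq W u v: u and v are equal modulo the group axioms and all substitution
  instances of laws in W, i.e. u V(F) = v V(F) where V(F) is the verbal subgroup.\<close>
inductive veq :: "gword set \<Rightarrow> gword \<Rightarrow> gword \<Rightarrow> bool" for W where
  refl: "veq W u u"
| sym: "veq W u v \<Longrightarrow> veq W v u"
| trans: "veq W u v \<Longrightarrow> veq W v w \<Longrightarrow> veq W u w"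
| mul_cong: "veq W u u' \<Longrightarrow> veq W v v' \<Longrightarrow> veq W (GMul u v) (GMul u' v')"
| inv_cong: "veq W u u' \<Longrightarrow> veq W (GInv u) (GInv u')"
| assoc: "veq W (GMul (GMul u v) w) (GMul u (GMul v w))"
| left_one: "veq W (GMul GOne u) u"
| left_inv: "veq W (GMul (GInv u) u) GOne"
| law: "w \<in> W \<Longrightarrow> veq W (gsubst s w) GOne"

definition words :: "nat \<Rightarrow> gword set" where
  "words k = {w. gvars w \<subseteq> {..<k}}"

definition vclass :: "gword set \<Rightarrow> nat \<Rightarrow> gword \<Rightarrow> gword set" where
  "vclass W k w = {v \<in> words k. veq W w v}"

text \<open>The relatively free group F_k(V) of rank k of the variety defined by W;
  its free generators are vclass W k (GVar i), i < k.\<close>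
definition rel_free_group :: "gword set \<Rightarrow> nat \<Rightarrow> gword set monoid" where
  "rel_free_group W k =
    \<lparr> carrier = vclass W k ` words k,
      mult = (\<lambda>A B. vclass W k (GMul (SOME a. a \<in> A) (SOME b. b \<in> B))),
      one = vclass W k GOne \<rparr>"

end

theory Submission
  imports Defs
begin

text \<open>
  Let \<open>F = F\<^sub>k(\<V>)\<close> with free generators \<open>x\<^sub>0, \<dots>, x\<^sub>k\<^sub>-\<^sub>1\<close>. Killing \<open>x\<^sub>i\<close> is a substitution,
  so it induces an idempotent endomorphism \<open>\<rho>\<^sub>i\<close> of \<open>F\<close> which fixes the subgroup \<open>H\<^sub>i\<close>
  generated by the other free generators. Hence distinct elements of \<open>N\<^sub>i = ker \<rho>\<^sub>i\<close> lie in
  distinct right cosets of \<open>H\<^sub>i\<close>, and finite index of \<open>H\<^sub>i\<close> forces \<open>N\<^sub>i\<close> to be finite.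
  Swapping \<open>x\<^sub>i\<close> and \<open>x\<^sub>j\<close> is an automorphism carrying \<open>N\<^sub>j\<close> into \<open>N\<^sub>i\<close>, so then every \<open>N\<^sub>j\<close>
  is finite. Finally, writing \<open>y = \<rho>\<^sub>j(y) \<cdot> n\<close> with \<open>n \<in> N\<^sub>j\<close> for \<open>j = 0, \<dots>, k-1\<close> in turn shows
  \<open>F = N\<^sub>k\<^sub>-\<^sub>1 \<cdots> N\<^sub>0\<close>, because killing all generators kills everything; so \<open>F\<close> is finite.
\<close>

section \<open>Retractions of a group\<close>

fun comp_upto :: "(nat \<Rightarrow> 'a \<Rightarrow> 'a) \<Rightarrow> nat \<Rightarrow> 'a \<Rightarrow> 'a" where
  "comp_upto r 0 = id"
| "comp_upto r (Suc t) = r t \<circ> comp_upto r t"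

context group
begin

lemma hom_fixes_generate:
  assumes r: "r \<in> hom G G" and K: "K \<subseteq> carrier G" and fixed: "\<And>x. x \<in> K \<Longrightarrow> r x = x"
    and h: "h \<in> generate G K"
  shows "r h = h"
  using h
proof induction
  case one
  show ?case using r by (simp add: hom_one is_group)
next
  case (incl h)
  then show ?case by (rule fixed)
next
  case (inv h)
  interpret group_hom G G r using r by (simp add: group_hom_def group_hom_axioms_def is_group)
  show ?case using inv K fixed by auto
next
  case (eng h1 h2)
  then show ?case using r generate_in_carrier[OF K] by (simp add: hom_mult)
qed

text \<open>If an endomorphism \<open>r\<close> fixes the subgroup \<open>H\<close> pointwise, distinct elements of its kernel
  lie in distinct right cosets of \<open>H\<close>: from \<open>v = h u\<close> we get \<open>1 = r v = h \<cdot> r u = h\<close>.\<close>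
lemma retraction_kernel_cosets_inj:
  assumes r: "r \<in> hom G G" and H: "subgroup H G" and fixed: "\<And>h. h \<in> H \<Longrightarrow> r h = h"
  shows "inj_on (\<lambda>x. H #> x) (kernel G G r)"
proof (rule inj_onI)
  interpret group_hom G G r using r by (simp add: group_hom_def group_hom_axioms_def is_group)
  fix u v assume u: "u \<in> kernel G G r" and v: "v \<in> kernel G G r" and eq: "H #> u = H #> v"
  have uG: "u \<in> carrier G" and vG: "v \<in> carrier G" and ru: "r u = \<one>" and rv: "r v = \<one>"
    using u v by (auto simp: kernel_def)
  have "v \<in> H #> u" using eq H vG by (metis rcos_self)
  then obtain h where hH: "h \<in> H" and v_eq: "v = h \<otimes> u" by (auto simp: r_coset_def)
  have hG: "h \<in> carrier G" using hH H by (simp add: subgroup.mem_carrier)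
  have "\<one> = r h \<otimes> r u" using rv v_eq hG uG by simp
  then have "h = \<one>" using ru fixed[OF hH] hG by simp
  then show "u = v" using v_eq uG by simp
qed

lemma finite_kernel_of_finite_index:
  assumes r: "r \<in> hom G G" and H: "subgroup H G" and fixed: "\<And>h. h \<in> H \<Longrightarrow> r h = h"
    and fin: "finite (rcosets H)"
  shows "finite (kernel G G r)"
proof -
  have "(\<lambda>x. H #> x) ` kernel G G r \<subseteq> rcosets H"
    by (auto simp: RCOSETS_def kernel_def)
  then show ?thesis
    using finite_imageD[OF _ retraction_kernel_cosets_inj[OF r H fixed]] finite_subset fin by blast
qed

lemma finite_kernel_conjugate:
  assumes s: "s \<in> hom G G" and invol: "\<And>x. x \<in> carrier G \<Longrightarrow> s (s x) = x"
    and comm: "\<And>x. x \<in> carrier G \<Longrightarrow> r (s x) = s (q x)"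
    and qG: "\<And>x. x \<in> carrier G \<Longrightarrow> q x \<in> carrier G"
    and fin: "finite (kernel G G r)"
  shows "finite (kernel G G q)"
proof -
  interpret group_hom G G s using s by (simp add: group_hom_def group_hom_axioms_def is_group)
  have "s ` kernel G G q \<subseteq> kernel G G r" using comm by (auto simp: kernel_def)
  moreover have "inj_on s (kernel G G q)" by (rule inj_on_inverseI[of _ s]) (auto simp: kernel_def invol)
  ultimately show ?thesis using fin by (meson finite_imageD finite_subset)
qed

lemma idempotent_hom_decomposition:
  assumes r: "r \<in> hom G G" and idem: "r (r y) = r y" and y: "y \<in> carrier G"
  shows "\<exists>n\<in>kernel G G r. y = r y \<otimes> n"
proof
  interpret group_hom G G r using r by (simp add: group_hom_def group_hom_axioms_def is_group)
  define n where "n = inv (r y) \<otimes> y"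
  show "n \<in> kernel G G r" using y idem by (simp add: kernel_def n_def)
  show "y = r y \<otimes> n" using y by (simp add: n_def m_assoc[symmetric])
qed

lemma comp_upto_closed:
  assumes hom: "\<And>t. t < k \<Longrightarrow> r t \<in> hom G G" and "t \<le> k" and "x \<in> carrier G"
  shows "comp_upto r t x \<in> carrier G"
  using assms(2) by (induction t) (auto simp: assms(3) hom[THEN hom_in_carrier])

text \<open>Peeling off one idempotent endomorphism after the other: every \<open>x\<close> is
  \<open>comp_upto r t x\<close> times an element of the finite set \<open>ker (r (t-1)) \<cdots> ker (r 0)\<close>.\<close>
lemma comp_upto_decomposition:
  assumes hom: "\<And>t. t < k \<Longrightarrow> r t \<in> hom G G"
    and idem: "\<And>t x. t < k \<Longrightarrow> x \<in> carrier G \<Longrightarrow> r t (r t x) = r t x"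
    and fin: "\<And>t. t < k \<Longrightarrow> finite (kernel G G (r t))"
    and "t \<le> k"
  shows "\<exists>M. finite M \<and> M \<subseteq> carrier G \<and> (\<forall>x\<in>carrier G. \<exists>m\<in>M. x = comp_upto r t x \<otimes> m)"
  using \<open>t \<le> k\<close>
proof (induction t)
  case 0
  then show ?case by (intro exI[of _ "{\<one>}"]) auto
next
  case (Suc t)
  then obtain M where M: "finite M" "M \<subseteq> carrier G"
    and dec: "\<And>x. x \<in> carrier G \<Longrightarrow> \<exists>m\<in>M. x = comp_upto r t x \<otimes> m"
    by auto
  let ?N = "kernel G G (r t)"
  have "finite (?N <#> M)" using fin Suc.prems M(1) by (auto simp: set_mult_def)
  moreover have "?N <#> M \<subseteq> carrier G" using M(2) by (auto simp: set_mult_def kernel_def)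
  moreover have "\<exists>m\<in>?N <#> M. x = comp_upto r (Suc t) x \<otimes> m" if x: "x \<in> carrier G" for x
  proof -
    define y where "y = comp_upto r t x"
    have yG: "y \<in> carrier G" using comp_upto_closed[OF hom _ x] Suc.prems by (simp add: y_def)
    obtain m where m: "m \<in> M" "x = y \<otimes> m" using dec[OF x] by (auto simp: y_def)
    obtain n where n: "n \<in> ?N" "y = r t y \<otimes> n"
      using idempotent_hom_decomposition[OF hom[of t] idem[of t y] yG] Suc.prems yG by auto
    have "n \<in> carrier G" "m \<in> carrier G" "r t y \<in> carrier G"
      using n(1) m(1) M(2) hom_in_carrier[OF hom yG] Suc.prems by (auto simp: kernel_def)
    then have "x = r t y \<otimes> (n \<otimes> m)"
      using m(2) n(2) by (simp add: m_assoc[symmetric])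
    then show ?thesis using m(1) n(1) by (auto simp: set_mult_def y_def)
  qed
  ultimately show ?case by blast
qed

lemma finite_carrier_of_finite_kernels:
  assumes hom: "\<And>t. t < k \<Longrightarrow> r t \<in> hom G G"
    and idem: "\<And>t x. t < k \<Longrightarrow> x \<in> carrier G \<Longrightarrow> r t (r t x) = r t x"
    and fin: "\<And>t. t < k \<Longrightarrow> finite (kernel G G (r t))"
    and trivial: "\<And>x. x \<in> carrier G \<Longrightarrow> comp_upto r k x = \<one>"
  shows "finite (carrier G)"
proof -
  have "\<exists>M. finite M \<and> M \<subseteq> carrier G \<and> (\<forall>x\<in>carrier G. \<exists>m\<in>M. x = comp_upto r k x \<otimes> m)"
    using hom idem fin order_refl by (rule comp_upto_decomposition)
  then obtain M where M: "finite M" "M \<subseteq> carrier G"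
    and dec: "\<forall>x\<in>carrier G. \<exists>m\<in>M. x = comp_upto r k x \<otimes> m"
    by blast
  have "carrier G \<subseteq> M"
  proof
    fix x assume x: "x \<in> carrier G"
    then obtain m where "m \<in> M" "x = comp_upto r k x \<otimes> m" using dec by blast
    then show "x \<in> M" using trivial[OF x] M(2) by auto
  qed
  then show ?thesis using M finite_subset by blast
qed

end

section \<open>Substitution in group words\<close>

lemma gsubst_comp: "gsubst s (gsubst t w) = gsubst (\<lambda>l. gsubst s (t l)) w"
  by (induct w) auto

lemma gsubst_cong: "(\<And>l. l \<in> gvars w \<Longrightarrow> s l = t l) \<Longrightarrow> gsubst s w = gsubst t w"
  by (induct w) auto

lemma gsubst_GVar [simp]: "gsubst GVar w = w"
  by (induct w) auto

text \<open>The laws of a variety are closed under substitution, hence so is equality modulo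
  the verbal subgroup; this is what makes substitutions induce endomorphisms.\<close>
lemma veq_subst: "veq W u v \<Longrightarrow> veq W (gsubst s u) (gsubst s v)"
proof (induct rule: veq.induct)
  case (law w t)
  then show ?case using veq.law[of w W "\<lambda>l. gsubst s (t l)"] by (simp add: gsubst_comp)
qed (auto intro: veq.intros)

lemma words_simps [simp]:
  "GMul a b \<in> words k \<longleftrightarrow> a \<in> words k \<and> b \<in> words k"
  "GInv a \<in> words k \<longleftrightarrow> a \<in> words k"
  "GOne \<in> words k"
  "GVar j \<in> words k \<longleftrightarrow> j < k"
  by (auto simp: words_def)

lemma words_subst:
  "u \<in> words k \<Longrightarrow> (\<And>l. l < k \<Longrightarrow> s l \<in> words k) \<Longrightarrow> gsubst s u \<in> words k"
  by (induct u) auto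

section \<open>The relatively free group\<close>

lemma vclass_self: "u \<in> words k \<Longrightarrow> u \<in> vclass W k u"
  by (simp add: vclass_def veq.refl)

lemma vclass_eq_iff:
  "u \<in> words k \<Longrightarrow> v \<in> words k \<Longrightarrow> vclass W k u = vclass W k v \<longleftrightarrow> veq W u v"
proof
  assume "u \<in> words k" "v \<in> words k" "vclass W k u = vclass W k v"
  then show "veq W u v" using vclass_self[of v k W] by (auto simp: vclass_def)
next
  assume "veq W u v"
  then show "vclass W k u = vclass W k v"
    by (auto simp: vclass_def intro: veq.trans veq.sym)
qed

text \<open>The representative chosen by the multiplication of the relatively free group.\<close>
lemma some_in_vclass:
  assumes "u \<in> words k"
  shows "(SOME a. a \<in> vclass W k u) \<in> words k \<and> veq W u (SOME a. a \<in> vclass W k u)"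
proof -
  have "(SOME a. a \<in> vclass W k u) \<in> vclass W k u" using vclass_self[OF assms] by (rule someI)
  then show ?thesis by (simp add: vclass_def)
qed

lemma rel_free_group_carrier: "carrier (rel_free_group W k) = vclass W k ` words k"
  by (simp add: rel_free_group_def)

lemma vclass_in_carrier: "u \<in> words k \<Longrightarrow> vclass W k u \<in> carrier (rel_free_group W k)"
  by (simp add: rel_free_group_carrier)

lemma rel_free_group_one: "\<one>\<^bsub>rel_free_group W k\<^esub> = vclass W k GOne"
  by (simp add: rel_free_group_def)

lemma rel_free_group_mult:
  "u \<in> words k \<Longrightarrow> v \<in> words k \<Longrightarrow>
    vclass W k u \<otimes>\<^bsub>rel_free_group W k\<^esub> vclass W k v = vclass W k (GMul u v)"
  using some_in_vclass[of u k W] some_in_vclass[of v k W]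
  by (simp add: rel_free_group_def vclass_eq_iff veq.mul_cong veq.sym)

lemma group_rel_free_group: "group (rel_free_group W k)"
proof (rule groupI)
  fix x y z
  assume "x \<in> carrier (rel_free_group W k)" "y \<in> carrier (rel_free_group W k)"
    "z \<in> carrier (rel_free_group W k)"
  then obtain u v w where "u \<in> words k" "v \<in> words k" "w \<in> words k"
    and "x = vclass W k u" "y = vclass W k v" "z = vclass W k w"
    by (auto simp: rel_free_group_carrier)
  then show "x \<otimes>\<^bsub>rel_free_group W k\<^esub> y \<otimes>\<^bsub>rel_free_group W k\<^esub> z =
      x \<otimes>\<^bsub>rel_free_group W k\<^esub> (y \<otimes>\<^bsub>rel_free_group W k\<^esub> z)"
    by (simp add: rel_free_group_mult vclass_eq_iff veq.assoc)
next
  fix x assume "x \<in> carrier (rel_free_group W k)"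
  then obtain u where u: "u \<in> words k" "x = vclass W k u"
    by (auto simp: rel_free_group_carrier)
  show "\<one>\<^bsub>rel_free_group W k\<^esub> \<otimes>\<^bsub>rel_free_group W k\<^esub> x = x"
    using u by (simp add: rel_free_group_mult rel_free_group_one vclass_eq_iff veq.left_one)
  show "\<exists>y\<in>carrier (rel_free_group W k). y \<otimes>\<^bsub>rel_free_group W k\<^esub> x = \<one>\<^bsub>rel_free_group W k\<^esub>"
    using u by (intro bexI[of _ "vclass W k (GInv u)"])
      (simp_all add: rel_free_group_carrier rel_free_group_mult rel_free_group_one
         vclass_eq_iff veq.left_inv)
qed (auto simp: rel_free_group_carrier rel_free_group_mult rel_free_group_one)

lemma rel_free_group_inv:
  "u \<in> words k \<Longrightarrow> inv\<^bsub>rel_free_group W k\<^esub> (vclass W k u) = vclass W k (GInv u)"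
  by (rule group.inv_equality[OF group_rel_free_group])
    (simp_all add: rel_free_group_carrier rel_free_group_mult rel_free_group_one
       vclass_eq_iff veq.left_inv)

lemma vclass_kill_all: "u \<in> words k \<Longrightarrow> vclass W k (gsubst (\<lambda>_. GOne) u) = \<one>\<^bsub>rel_free_group W k\<^esub>"
proof (induct u)
  case (GMul a b)
  interpret group "rel_free_group W k" by (rule group_rel_free_group)
  show ?case using GMul by (simp add: rel_free_group_mult[symmetric] words_subst)
next
  case (GInv a)
  interpret group "rel_free_group W k" by (rule group_rel_free_group)
  show ?case using GInv by (simp add: rel_free_group_inv[symmetric] words_subst)
qed (auto simp: rel_free_group_one)

section \<open>Endomorphisms induced by substitutions\<close>

text \<open>A substitution sending the first k variables to words in the first k variables
  induces an endomorphism of the relatively free group of rank k (every law of the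
  variety holds in it).\<close>
definition subst_endo :: "gword set \<Rightarrow> nat \<Rightarrow> (nat \<Rightarrow> gword) \<Rightarrow> gword set \<Rightarrow> gword set" where
  "subst_endo W k s A = vclass W k (gsubst s (SOME a. a \<in> A))"

definition admissible :: "nat \<Rightarrow> (nat \<Rightarrow> gword) \<Rightarrow> bool" where
  "admissible k s \<longleftrightarrow> (\<forall>l<k. s l \<in> words k)"

lemma admissible_words_subst: "admissible k s \<Longrightarrow> u \<in> words k \<Longrightarrow> gsubst s u \<in> words k"
  by (simp add: admissible_def words_subst)

lemma subst_endo_vclass:
  assumes s: "admissible k s" and u: "u \<in> words k"
  shows "subst_endo W k s (vclass W k u) = vclass W k (gsubst s u)"
proof -
  obtain a where a: "a = (SOME a. a \<in> vclass W k u)" by blast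
  then have "a \<in> words k" "veq W (gsubst s u) (gsubst s a)"
    using some_in_vclass[OF u, of W] veq_subst by auto
  then show ?thesis using a s u by (simp add: subst_endo_def vclass_eq_iff admissible_words_subst veq.sym)
qed

lemma subst_endo_hom:
  assumes s: "admissible k s"
  shows "subst_endo W k s \<in> hom (rel_free_group W k) (rel_free_group W k)"
  using s by (auto simp: hom_def rel_free_group_carrier subst_endo_vclass rel_free_group_mult
      admissible_words_subst)

text \<open>Composition of induced endomorphisms is induced by composition of substitutions;
  this reduces all identities between them to identities between substitutions.\<close>
lemma subst_endo_comp:
  assumes s: "admissible k s" and t: "admissible k t" and x: "x \<in> carrier (rel_free_group W k)"
  shows "subst_endo W k s (subst_endo W k t x) = subst_endo W k (\<lambda>l. gsubst s (t l)) x"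
proof -
  have "admissible k (\<lambda>l. gsubst s (t l))"
    using s t by (simp add: admissible_def admissible_words_subst)
  then show ?thesis using s t x
    by (auto simp: rel_free_group_carrier subst_endo_vclass admissible_words_subst gsubst_comp)
qed

lemma subst_endo_GVar: "x \<in> carrier (rel_free_group W k) \<Longrightarrow> subst_endo W k GVar x = x"
  by (auto simp: rel_free_group_carrier subst_endo_vclass admissible_def)

section \<open>Killing and swapping free generators\<close>

definition kill_var :: "nat \<Rightarrow> nat \<Rightarrow> gword" where
  "kill_var i l = (if l = i then GOne else GVar l)"

definition kill_below :: "nat \<Rightarrow> nat \<Rightarrow> gword" where
  "kill_below t l = (if l < t then GOne else GVar l)"

definition swap_vars :: "nat \<Rightarrow> nat \<Rightarrow> nat \<Rightarrow> gword" where
  "swap_vars i j l = GVar (if l = i then j else if l = j then i else l)"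

lemma admissible_kill_var: "admissible k (kill_var i)"
  by (simp add: admissible_def kill_var_def)

lemma admissible_kill_below: "admissible k (kill_below t)"
  by (simp add: admissible_def kill_below_def)

lemma admissible_swap_vars: "i < k \<Longrightarrow> j < k \<Longrightarrow> admissible k (swap_vars i j)"
  by (simp add: admissible_def swap_vars_def)

abbreviation retract :: "gword set \<Rightarrow> nat \<Rightarrow> nat \<Rightarrow> gword set \<Rightarrow> gword set" where
  "retract W k i \<equiv> subst_endo W k (kill_var i)"

lemma retract_idem:
  assumes "x \<in> carrier (rel_free_group W k)"
  shows "retract W k i (retract W k i x) = retract W k i x"
proof -
  have "(\<lambda>l. gsubst (kill_var i) (kill_var i l)) = kill_var i"
    by (auto simp: kill_var_def)
  then show ?thesis using assms by (simp add: subst_endo_comp admissible_kill_var)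
qed

lemma retract_fixes_other_generators:
  assumes "h \<in> generate (rel_free_group W k) {vclass W k (GVar j) | j. j < k \<and> j \<noteq> i}"
  shows "retract W k i h = h"
proof (rule group.hom_fixes_generate[OF group_rel_free_group subst_endo_hom[OF admissible_kill_var] _ _ assms])
  show "{vclass W k (GVar j) | j. j < k \<and> j \<noteq> i} \<subseteq> carrier (rel_free_group W k)"
    by (auto simp: vclass_in_carrier)
  fix x assume "x \<in> {vclass W k (GVar j) | j. j < k \<and> j \<noteq> i}"
  then obtain j where "j < k" "j \<noteq> i" "x = vclass W k (GVar j)" by blast
  then show "retract W k i x = x"
    by (simp add: subst_endo_vclass admissible_kill_var kill_var_def)
qed

text \<open>The kernels of the retractions are conjugate under the automorphisms permuting
  the free generators, so they are all finite as soon as one of them is.\<close>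
lemma finite_kernel_retract_transfer:
  assumes fin: "finite (kernel (rel_free_group W k) (rel_free_group W k) (retract W k i))"
    and ij: "i < k" "j < k"
  shows "finite (kernel (rel_free_group W k) (rel_free_group W k) (retract W k j))"
proof (rule group.finite_kernel_conjugate[OF group_rel_free_group
      subst_endo_hom[OF admissible_swap_vars[OF ij]] _ _ _ fin])
  fix x assume x: "x \<in> carrier (rel_free_group W k)"
  have "(\<lambda>l. gsubst (swap_vars i j) (swap_vars i j l)) = GVar"
    by (auto simp: swap_vars_def)
  then show "subst_endo W k (swap_vars i j) (subst_endo W k (swap_vars i j) x) = x"
    using x ij by (simp add: subst_endo_comp admissible_swap_vars subst_endo_GVar)
  have "(\<lambda>l. gsubst (kill_var i) (swap_vars i j l)) = (\<lambda>l. gsubst (swap_vars i j) (kill_var j l))"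
    by (auto simp: swap_vars_def kill_var_def)
  then show "retract W k i (subst_endo W k (swap_vars i j) x) =
      subst_endo W k (swap_vars i j) (retract W k j x)"
    using x ij by (simp add: subst_endo_comp admissible_swap_vars admissible_kill_var)
  show "retract W k j x \<in> carrier (rel_free_group W k)"
    using x subst_endo_hom[OF admissible_kill_var] by (simp add: hom_def Pi_def)
qed

lemma retract_all_trivial:
  assumes x: "x \<in> carrier (rel_free_group W k)"
  shows "comp_upto (retract W k) k x = \<one>\<^bsub>rel_free_group W k\<^esub>"
proof -
  have "comp_upto (retract W k) t x = subst_endo W k (kill_below t) x" for t
  proof (induction t)
    case 0
    have "kill_below 0 = GVar" by (auto simp: kill_below_def)
    then show ?case using x by (simp add: subst_endo_GVar)
  next
    case (Suc t)
    have "(\<lambda>l. gsubst (kill_var t) (kill_below t l)) = kill_below (Suc t)"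
      by (auto simp: kill_var_def kill_below_def)
    then show ?case using Suc x by (simp add: subst_endo_comp admissible_kill_var admissible_kill_below)
  qed
  moreover obtain u where u: "u \<in> words k" "x = vclass W k u"
    using x by (auto simp: rel_free_group_carrier)
  moreover have "gsubst (kill_below k) u = gsubst (\<lambda>_. GOne) u"
    using u by (intro gsubst_cong) (auto simp: kill_below_def words_def)
  ultimately show ?thesis
    by (simp add: subst_endo_vclass admissible_kill_below vclass_kill_all)
qed

theorem mainTheorem8:
  fixes W :: "gword set" and m i :: nat
  assumes "infinite (carrier (rel_free_group W (Suc m)))"
    and "i \<le> m"
  shows "infinite (rcosets\<^bsub>rel_free_group W (Suc m)\<^esub>
           (generate (rel_free_group W (Suc m))
              {vclass W (Suc m) (GVar j) | j. j \<le> m \<and> j \<noteq> i}))"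
proof
  define k where "k = Suc m"
  let ?G = "rel_free_group W k"
  define H where "H = generate ?G {vclass W k (GVar j) | j. j < k \<and> j \<noteq> i}"
  have i: "i < k" using assms(2) by (simp add: k_def)
  assume "finite (rcosets\<^bsub>rel_free_group W (Suc m)\<^esub>
           (generate (rel_free_group W (Suc m))
              {vclass W (Suc m) (GVar j) | j. j \<le> m \<and> j \<noteq> i}))"
  then have "finite (rcosets\<^bsub>?G\<^esub> H)"
    by (simp add: H_def k_def less_Suc_eq_le)
  moreover have "subgroup H ?G"
    unfolding H_def by (intro group.generate_is_subgroup[OF group_rel_free_group])
      (auto simp: vclass_in_carrier)
  ultimately have "finite (kernel ?G ?G (retract W k i))"
    using group.finite_kernel_of_finite_index[OF group_rel_free_group
        subst_endo_hom[OF admissible_kill_var]] retract_fixes_other_generators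
    by (simp add: H_def)
  then have "finite (carrier ?G)"
    using i finite_kernel_retract_transfer
    by (intro group.finite_carrier_of_finite_kernels[OF group_rel_free_group, of k "retract W k"])
      (auto simp: subst_endo_hom admissible_kill_var retract_idem retract_all_trivial)
  then show False using assms(1) by (simp add: k_def)
qed

end
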